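(* Let $(X,\mu)$ be a non-atomic probability measure space equipped with a tree $\mathcal{T}$, with associated dyadic maximal operator $\mathcal{M}_{\mathcal{T}}$, and let $0<q<1$. Let $g:(0,1]\to\mathbb{R}^+$ be integrable and non-increasing with $\int_0^1\big(\frac1t\int_0^t g(u)\,du\big)^q dt<+\infty$. Then for every measurable $\phi:X\to\mathbb{R}^+$ with $\phi^*=g$, $$\int_X(\mathcal{M}_{\mathcal{T}}\phi)^q\,d\mu\le\int_0^1\Big(\frac1t\int_0^t g(u)\,du\Big)^q dt.$$
   Context: A set $\mathcal{T}$ of measurable subsets of $X$ is a tree if: (i) $X\in\mathcal{T}$ and $\mu(I)>0$ for every $I\in\mathcal{T}$; (ii) for every $I\in\mathcal{T}$ there is a finite or countable set $C(I)\subseteq\mathcal{T}$ with at least two elements, consisting of pairwise disjoint subsets of $I$ whose union is $I$; (iii) $\mathcal{T}=\bigcup_{m\ge0}\mathcal{T}_{(m)}$ where $\mathcal{T}_{(0)}=\{X\}$ and $\mathcal{T}_{(m+1)}=\bigcup_{I\in\mathcal{T}_{(m)}}C(I)$; (iv) $\lim_{m\to\infty}\sup_{I\in\mathcal{T}_{(m)}}\mu(I)=0$. The dyadic maximal operator is $\mathcal{M}_{\mathcal{T}}\phi(x)=\sup\{\frac{1}{\mu(I)}\int_I|\phi|\,d\mu : x\in I\in\mathcal{T}\}$. The decreasing rearrangement of $\phi$ is $\phi^*(t)=\sup_{e\subseteq X,\ \mu(e)=t}\ \inf_{x\in e}|\phi(x)|$ for $0<t\le1$. *)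

theory Defs
  imports "HOL-Probability.Probability"
begin

definition non_atomic :: "'a measure \<Rightarrow> bool" where
  "non_atomic M \<longleftrightarrow> (\<forall>A\<in>sets M. measure M A > 0 \<longrightarrow>
      (\<exists>B\<in>sets M. B \<subseteq> A \<and> 0 < measure M B \<and> measure M B < measure M A))"

primrec tree_level :: "'a set \<Rightarrow> ('a set \<Rightarrow> 'a set set) \<Rightarrow> nat \<Rightarrow> 'a set set" where
  "tree_level X C 0 = {X}"
| "tree_level X C (Suc m) = (\<Union>I\<in>tree_level X C m. C I)"

definition tree_with_children :: "'a measure \<Rightarrow> 'a set set \<Rightarrow> ('a set \<Rightarrow> 'a set set) \<Rightarrow> bool" where
  "tree_with_children M T C \<longleftrightarrow>
     T \<subseteq> sets M \<and>
     space M \<in> T \<and> (\<forall>I\<in>T. measure M I > 0) \<and>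
     (\<forall>I\<in>T. C I \<subseteq> T \<and> countable (C I) \<and> (\<exists>J\<in>C I. \<exists>K\<in>C I. J \<noteq> K) \<and>
              (\<forall>J\<in>C I. J \<subseteq> I) \<and> pairwise disjnt (C I) \<and> \<Union>(C I) = I) \<and>
     T = (\<Union>m. tree_level (space M) C m) \<and>
     (\<lambda>m. SUP I\<in>tree_level (space M) C m. measure M I) \<longlonglongrightarrow> 0"

definition is_tree :: "'a measure \<Rightarrow> 'a set set \<Rightarrow> bool" where
  "is_tree M T \<longleftrightarrow> (\<exists>C. tree_with_children M T C)"

definition dyadic_max :: "'a measure \<Rightarrow> 'a set set \<Rightarrow> ('a \<Rightarrow> real) \<Rightarrow> 'a \<Rightarrow> ennreal" where
  "dyadic_max M T \<phi> x = (SUP I\<in>{I\<in>T. x \<in> I}. (\<integral>\<^sup>+ y\<in>I. ennreal \<bar>\<phi> y\<bar> \<partial>M) / emeasure M I)"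

definition decr_rearr :: "'a measure \<Rightarrow> ('a \<Rightarrow> real) \<Rightarrow> real \<Rightarrow> real" where
  "decr_rearr M \<phi> t = (SUP e\<in>{e\<in>sets M. measure M e = t}. INF x\<in>e. \<bar>\<phi> x\<bar>)"

definition ennreal_powr :: "ennreal \<Rightarrow> real \<Rightarrow> ennreal" where
  "ennreal_powr x q = (if x = \<infinity> then \<infinity> else ennreal (enn2real x powr q))"

end

theory Submission
  imports Defs
begin

text \<open>By the layer-cake formula it suffices to compare distribution functions: for every \<open>l \<ge> 0\<close>,
  the level set \<open>E = {M\<^sub>T \<phi> > l}\<close> has measure at most that of \<open>{t \<in> (0,1]. (1/t) \<integral>\<^sub>0\<^sup>t g > l}\<close>;
  raising to the power \<open>q\<close> only relabels the levels. \<open>E\<close> is the disjoint union of the maximal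
  tree sets on which the average of \<open>\<phi>\<close> exceeds \<open>l\<close>, hence \<open>l \<mu>(E) < \<integral>\<^sub>E \<phi>\<close>. The
  Hardy--Littlewood inequality bounds \<open>\<integral>\<^sub>E \<phi>\<close> by the integral of \<open>g\<close> over \<open>(0, \<mu>(E)]\<close>; it uses
  non-atomicity to realise level sets of \<open>\<phi>\<close> by sets of any prescribed smaller measure. So the mean
  of \<open>g\<close> over \<open>(0, \<mu>(E)]\<close> exceeds \<open>l\<close>, and as \<open>g\<close> is non-increasing, so are its means, which
  therefore exceed \<open>l\<close> on all of \<open>(0, \<mu>(E)]\<close>.\<close>

section \<open>Comparison of distribution functions\<close>

lemma emeasure_lborel_nonneg_below:
  fixes c :: ennreal
  shows "emeasure lborel {r::real. 0 \<le> r \<and> ennreal r < c} = c"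
proof (cases c)
  case (real a)
  then have "{r::real. 0 \<le> r \<and> ennreal r < c} = {0..<a}"
    by (auto simp: ennreal_less_iff)
  then show ?thesis using real by simp
next
  case top
  then have "{r::real. 0 \<le> r \<and> ennreal r < c} = {0..}" by auto
  moreover have "emeasure lborel {0::real..} = \<infinity>"
  proof -
    have "of_nat n \<le> emeasure lborel {0::real..}" for n
    proof -
      have "emeasure lborel {0::real..<real n} \<le> emeasure lborel {0::real..}"
        by (intro emeasure_mono) auto
      then show ?thesis by (simp add: ennreal_of_nat_eq_real_of_nat)
    qed
    then have "(SUP n. of_nat n :: ennreal) \<le> emeasure lborel {0::real..}"
      by (rule SUP_least)
    then show ?thesis by (simp add: ennreal_SUP_of_nat_eq_top top_unique)
  qed
  ultimately show ?thesis using top by simp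
qed

lemma nn_integral_layer_cake:
  fixes f :: "'a \<Rightarrow> ennreal"
  assumes "sigma_finite_measure M" and [measurable]: "f \<in> borel_measurable M"
  shows "(\<integral>\<^sup>+x. f x \<partial>M) = (\<integral>\<^sup>+r. indicator {0..} r * emeasure M {x\<in>space M. ennreal r < f x} \<partial>lborel)"
proof -
  interpret pair_sigma_finite M lborel
    by (intro pair_sigma_finite.intro assms(1) lborel.sigma_finite_measure_axioms)
  define H where "H x = (indicator {r. 0 \<le> r \<and> ennreal r < f x} :: real \<Rightarrow> ennreal)" for x
  have "(\<lambda>(x, r). H x r) \<in> borel_measurable (M \<Otimes>\<^sub>M lborel)"
    unfolding H_def indicator_def mem_Collect_eq split_beta' by measurable
  from Fubini'[OF this]
  have "(\<integral>\<^sup>+x. (\<integral>\<^sup>+r. H x r \<partial>lborel) \<partial>M) = (\<integral>\<^sup>+r. (\<integral>\<^sup>+x. H x r \<partial>M) \<partial>lborel)"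
    by simp
  moreover have "(\<integral>\<^sup>+r. H x r \<partial>lborel) = f x" for x
    using emeasure_lborel_nonneg_below[of "f x"] by (simp add: H_def)
  moreover have "(\<integral>\<^sup>+x. H x r \<partial>M) = indicator {0..} r * emeasure M {x\<in>space M. ennreal r < f x}" for r
  proof -
    have "(\<integral>\<^sup>+x. H x r \<partial>M) = (\<integral>\<^sup>+x. indicator {0..} r * indicator {x\<in>space M. ennreal r < f x} x \<partial>M)"
      by (intro nn_integral_cong) (simp add: H_def indicator_def)
    then show ?thesis by (simp add: nn_integral_cmult)
  qed
  ultimately show ?thesis by simp
qed

lemma nn_integral_mono_distribution:
  fixes f :: "'a \<Rightarrow> ennreal" and h :: "'b \<Rightarrow> ennreal"
  assumes "sigma_finite_measure M" "sigma_finite_measure N"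
    and "f \<in> borel_measurable M" "h \<in> borel_measurable N"
    and "\<And>r. 0 \<le> r \<Longrightarrow>
      emeasure M {x\<in>space M. ennreal r < f x} \<le> emeasure N {y\<in>space N. ennreal r < h y}"
  shows "(\<integral>\<^sup>+x. f x \<partial>M) \<le> (\<integral>\<^sup>+y. h y \<partial>N)"
  unfolding nn_integral_layer_cake[OF assms(1,3)] nn_integral_layer_cake[OF assms(2,4)]
  by (intro nn_integral_mono) (auto simp: indicator_def assms(5))

lemma less_powr_iff_powr_inverse_less:
  fixes r d q :: real assumes "0 \<le> r" "0 \<le> d" "0 < q"
  shows "r < d powr q \<longleftrightarrow> r powr (1 / q) < d"
proof
  assume "r < d powr q"
  then have "r powr (1 / q) < (d powr q) powr (1 / q)"
    using assms by (intro powr_less_mono2) auto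
  then show "r powr (1 / q) < d" using assms by (simp add: powr_powr)
next
  assume "r powr (1 / q) < d"
  then have "(r powr (1 / q)) powr q < d powr q"
    using assms by (intro powr_less_mono2) auto
  then show "r < d powr q" using assms by (simp add: powr_powr)
qed

lemma less_ennreal_powr_iff:
  assumes "0 \<le> r" "0 < q"
  shows "ennreal r < ennreal_powr x q \<longleftrightarrow> ennreal (r powr (1 / q)) < x"
proof (cases x)
  case (real d)
  then show ?thesis
    using assms less_powr_iff_powr_inverse_less[of r d q] by (simp add: ennreal_powr_def ennreal_less_iff)
qed (simp add: ennreal_powr_def)

section \<open>Non-atomic measures\<close>

lemma non_atomic_small_subset:
  assumes "finite_measure M" "non_atomic M"
    and "A \<in> sets M" "0 < measure M A" "0 < \<epsilon>"
  shows "\<exists>B\<in>sets M. B \<subseteq> A \<and> 0 < measure M B \<and> measure M B < \<epsilon>"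
proof -
  interpret finite_measure M by fact
  have halving: "\<exists>B\<in>sets M. B \<subseteq> A \<and> 0 < measure M B \<and> measure M B \<le> measure M A / 2 ^ n" for n
  proof (induction n)
    case 0
    then show ?case using assms by auto
  next
    case (Suc n)
    then obtain B where B: "B \<in> sets M" "B \<subseteq> A" "0 < measure M B" "measure M B \<le> measure M A / 2 ^ n"
      by blast
    then obtain B' where B': "B' \<in> sets M" "B' \<subseteq> B" "0 < measure M B'" "measure M B' < measure M B"
      using \<open>non_atomic M\<close> unfolding non_atomic_def by blast
    have "measure M (B - B') = measure M B - measure M B'"
      using B B' by (intro finite_measure_Diff) auto
    moreover have "measure M B / 2 \<le> measure M A / 2 ^ Suc n"
      using B(4) by (simp add: divide_right_mono)
    ultimately have "B' \<subseteq> A \<and> 0 < measure M B' \<and> measure M B' \<le> measure M A / 2 ^ Suc n \<or>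
        B - B' \<subseteq> A \<and> 0 < measure M (B - B') \<and> measure M (B - B') \<le> measure M A / 2 ^ Suc n"
      using B B' by auto
    then show ?case using B B' by blast
  qed
  obtain n where "measure M A / \<epsilon> < 2 ^ n"
    using real_arch_pow[of 2 "measure M A / \<epsilon>"] by auto
  then have "measure M A / 2 ^ n < \<epsilon>" using assms by (simp add: field_simps)
  moreover obtain B where "B \<in> sets M" "B \<subseteq> A" "0 < measure M B" "measure M B \<le> measure M A / 2 ^ n"
    using halving by blast
  ultimately show ?thesis by (intro bexI[of _ B]) auto
qed

lemma non_atomic_greedy_step:
  assumes "finite_measure M" and "D \<in> sets M" "measure M D \<le> t"
  shows "\<exists>B\<in>sets M. B \<subseteq> A - D \<and> measure M D + measure M B \<le> t \<and>
    (\<forall>B'\<in>sets M. B' \<subseteq> A - D \<longrightarrow> measure M D + measure M B' \<le> t \<longrightarrow> measure M B' \<le> 2 * measure M B)"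
proof -
  interpret finite_measure M by fact
  define adm where "adm B \<longleftrightarrow> B \<in> sets M \<and> B \<subseteq> A - D \<and> measure M D + measure M B \<le> t" for B
  let ?\<sigma> = "Sup (measure M ` Collect adm)"
  have adm_empty: "adm {}" using assms by (simp add: adm_def)
  have bdd: "bdd_above (measure M ` Collect adm)"
    by (intro bdd_aboveI[of _ "measure M (space M)"]) (auto simp: adm_def intro!: bounded_measure)
  obtain B where B: "adm B" "?\<sigma> \<le> 2 * measure M B"
  proof (cases "?\<sigma> > 0")
    case True
    then have "?\<sigma> / 2 < ?\<sigma>" by simp
    then obtain B where "adm B" "?\<sigma> / 2 < measure M B"
      using adm_empty bdd by (subst (asm) less_cSup_iff) auto
    then show ?thesis using that[of B] by simp
  next
    case False
    then show ?thesis using that[of "{}"] adm_empty by simp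
  qed
  have "measure M B' \<le> 2 * measure M B" if "adm B'" for B'
  proof -
    have "measure M B' \<le> ?\<sigma>" using that bdd by (intro cSup_upper) auto
    with B(2) show ?thesis by linarith
  qed
  with B(1) show ?thesis unfolding adm_def by blast
qed

lemma non_atomic_subset_measure_eq:
  assumes "finite_measure M" "non_atomic M"
    and "A \<in> sets M" "0 \<le> t" "t \<le> measure M A"
  shows "\<exists>E\<in>sets M. E \<subseteq> A \<and> measure M E = t"
proof -
  interpret finite_measure M by fact
  define adm where "adm D B \<longleftrightarrow> B \<in> sets M \<and> B \<subseteq> A - D \<and> measure M D + measure M B \<le> t" for D B
  have "\<exists>B. D \<in> sets M \<and> measure M D \<le> t \<longrightarrow>
      adm D B \<and> (\<forall>B'. adm D B' \<longrightarrow> measure M B' \<le> 2 * measure M B)" for D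
    using non_atomic_greedy_step[OF \<open>finite_measure M\<close>, of D t A] unfolding adm_def by blast
  then obtain nxt where nxt: "\<And>D. D \<in> sets M \<Longrightarrow> measure M D \<le> t \<Longrightarrow>
      adm D (nxt D) \<and> (\<forall>B'. adm D B' \<longrightarrow> measure M B' \<le> 2 * measure M (nxt D))"
    by metis
  define e where "e = rec_nat {} (\<lambda>_ D. D \<union> nxt D)"
  have e_Suc: "e (Suc n) = e n \<union> nxt (e n)" for n by (simp add: e_def)
  have e_adm: "e n \<in> sets M \<and> e n \<subseteq> A \<and> measure M (e n) \<le> t" for n
  proof (induction n)
    case 0
    then show ?case using assms by (simp add: e_def)
  next
    case (Suc n)
    then have "adm (e n) (nxt (e n))" using nxt by blast
    moreover from this have "measure M (e (Suc n)) = measure M (e n) + measure M (nxt (e n))"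
      using Suc unfolding e_Suc adm_def by (intro finite_measure_Union) auto
    ultimately show ?case using Suc by (auto simp: e_Suc adm_def)
  qed
  define E where "E = (\<Union>n. e n)"
  have E: "E \<in> sets M" "E \<subseteq> A" using e_adm by (auto simp: E_def)
  have "incseq e" by (rule incseq_SucI) (simp add: e_Suc)
  then have "(\<lambda>n. measure M (e n)) \<longlonglongrightarrow> measure M E"
    unfolding E_def using e_adm by (intro finite_Lim_measure_incseq) auto
  then have "measure M E \<le> t" using e_adm by (intro LIMSEQ_le_const2) auto
  moreover have "t \<le> measure M E"
  proof (rule ccontr)
    assume "\<not> t \<le> measure M E"
    moreover have "measure M (A - E) = measure M A - measure M E"
      using assms E by (intro finite_measure_Diff) auto
    ultimately obtain B where B: "B \<in> sets M" "B \<subseteq> A - E" "0 < measure M B" "measure M B < t - measure M E"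
      using non_atomic_small_subset[OF assms(1,2), of "A - E" "t - measure M E"] assms E by auto
    \<comment> \<open>\<open>B\<close> stays admissible at every stage, so every step adds at least \<open>measure M B / 2\<close>\<close>
    have growth: "real n * (measure M B / 2) \<le> measure M (e n)" for n
    proof (induction n)
      case 0
      then show ?case by simp
    next
      case (Suc n)
      have "e n \<subseteq> E" "measure M (e n) \<le> measure M E"
        using e_adm E by (auto simp: E_def intro!: finite_measure_mono)
      then have "adm (e n) B" using B by (auto simp: adm_def)
      then have "measure M B \<le> 2 * measure M (nxt (e n))" "adm (e n) (nxt (e n))"
        using nxt e_adm by blast+
      moreover from this(2) have "measure M (e (Suc n)) = measure M (e n) + measure M (nxt (e n))"
        using e_adm unfolding e_Suc adm_def by (intro finite_measure_Union) auto
      ultimately show ?case using Suc by (simp add: algebra_simps)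
    qed
    obtain n where "t / (measure M B / 2) < real n" using reals_Archimedean2 by blast
    then have "t < real n * (measure M B / 2)" using B by (simp add: field_simps)
    with growth[of n] e_adm[of n] show False by simp
  qed
  ultimately show ?thesis using E by (intro bexI[of _ E]) auto
qed

section \<open>Trees\<close>

context
  fixes M :: "'a measure" and T :: "'a set set" and C :: "'a set \<Rightarrow> 'a set set"
  assumes tree: "tree_with_children M T C"
begin

private abbreviation "L \<equiv> tree_level (space M) C"

lemma tree_eq_Union_levels: "T = (\<Union>m. L m)"
  and tree_subset_sets: "T \<subseteq> sets M"
  and tree_measure_pos: "I \<in> T \<Longrightarrow> 0 < measure M I"
  and tree_children: "I \<in> T \<Longrightarrow> C I \<subseteq> T \<and> countable (C I) \<and> (\<forall>J\<in>C I. J \<subseteq> I) \<and>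
      pairwise disjnt (C I) \<and> \<Union>(C I) = I"
  using tree unfolding tree_with_children_def by blast+

lemma tree_level_subset: "L m \<subseteq> T"
  using tree_eq_Union_levels by blast

lemma tree_level_disjoint: "I \<in> L m \<Longrightarrow> J \<in> L m \<Longrightarrow> I \<noteq> J \<Longrightarrow> I \<inter> J = {}"
proof (induction m arbitrary: I J)
  case 0
  then show ?case by simp
next
  case (Suc m)
  then obtain I0 J0 where I0: "I0 \<in> L m" "I \<in> C I0" and J0: "J0 \<in> L m" "J \<in> C J0" by auto
  then have I0T: "I0 \<in> T" and J0T: "J0 \<in> T" using tree_level_subset by auto
  show ?case
  proof (cases "I0 = J0")
    case True
    then show ?thesis
      using tree_children[OF I0T] I0 J0 Suc.prems unfolding pairwise_def disjnt_def by blast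
  next
    case False
    then have "I0 \<inter> J0 = {}" using Suc.IH I0 J0 by blast
    moreover have "I \<subseteq> I0" "J \<subseteq> J0" using tree_children[OF I0T] tree_children[OF J0T] I0 J0 by auto
    ultimately show ?thesis by blast
  qed
qed

lemma tree_level_ancestor: "J \<in> L (m + k) \<Longrightarrow> \<exists>I\<in>L m. J \<subseteq> I"
proof (induction k arbitrary: J)
  case 0
  then show ?case by auto
next
  case (Suc k)
  then obtain J0 where J0: "J0 \<in> L (m + k)" "J \<in> C J0" by auto
  then have "J \<subseteq> J0" using tree_children tree_level_subset by blast
  with Suc.IH[OF J0(1)] show ?case by blast
qed

lemma tree_nested:
  assumes "I \<in> T" "J \<in> T" shows "I \<subseteq> J \<or> J \<subseteq> I \<or> I \<inter> J = {}"
proof -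
  obtain m n where I: "I \<in> L m" and J: "J \<in> L n" using assms tree_eq_Union_levels by blast
  show ?thesis
  proof (cases "m \<le> n")
    case True
    then obtain k where "n = m + k" using le_Suc_ex by blast
    then obtain I' where "I' \<in> L m" "J \<subseteq> I'" using tree_level_ancestor J by blast
    then show ?thesis using tree_level_disjoint[OF I] by blast
  next
    case False
    then obtain k where "m = n + k" using le_Suc_ex[of n m] by auto
    then obtain J' where "J' \<in> L n" "I \<subseteq> J'" using tree_level_ancestor I by blast
    then show ?thesis using tree_level_disjoint[OF J] by blast
  qed
qed

lemma finite_tree_ancestors:
  assumes "I \<in> T" shows "finite {J\<in>T. I \<subseteq> J}"
proof -
  obtain n where I: "I \<in> L n" using assms tree_eq_Union_levels by blast
  have "I \<noteq> {}" using tree_measure_pos[OF assms] by auto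
  then have unique: "K = K'" if "K \<in> L m" "K' \<in> L m" "I \<subseteq> K" "I \<subseteq> K'" for K K' m
    using tree_level_disjoint[OF that(1,2)] that(3,4) by blast
  have "{J\<in>T. I \<subseteq> J} \<subseteq> (\<Union>m\<le>n. {K\<in>L m. I \<subseteq> K})"
  proof
    fix J assume "J \<in> {J\<in>T. I \<subseteq> J}"
    then obtain m where J: "J \<in> L m" "I \<subseteq> J" using tree_eq_Union_levels by blast
    show "J \<in> (\<Union>m\<le>n. {K\<in>L m. I \<subseteq> K})"
    proof (cases "m \<le> n")
      case True
      then show ?thesis using J by blast
    next
      case False
      then obtain k where "m = n + k" using le_Suc_ex[of n m] by auto
      then obtain I' where "I' \<in> L n" "J \<subseteq> I'" using tree_level_ancestor J by blast
      then have "I = J" using unique[OF I] J by blast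
      then show ?thesis using I by blast
    qed
  qed
  moreover have "finite {K\<in>L m. I \<subseteq> K}" for m
  proof (cases "{K\<in>L m. I \<subseteq> K} = {}")
    case False
    then obtain K where "K \<in> L m" "I \<subseteq> K" by blast
    then have "{K\<in>L m. I \<subseteq> K} \<subseteq> {K}" using unique by blast
    then show ?thesis by (rule finite_subset) simp
  qed (simp only: finite.emptyI)
  ultimately show ?thesis by (auto intro: finite_subset)
qed

lemma countable_tree: "countable T"
proof -
  have "countable (L m)" for m
    by (induction m) (use tree_children tree_level_subset in \<open>auto intro!: countable_UN\<close>)
  then show ?thesis using tree_eq_Union_levels by auto
qed

lemma tree_maximal_elements:
  assumes "F \<subseteq> T"
  defines "F' \<equiv> {I\<in>F. \<forall>J\<in>F. I \<subseteq> J \<longrightarrow> J = I}"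
  shows "\<Union>F' = \<Union>F" and "disjoint F'"
proof -
  have "\<exists>K\<in>F'. I \<subseteq> K" if I: "I \<in> F" for I
  proof -
    let ?S = "{J\<in>F. I \<subseteq> J}"
    have "?S \<subseteq> {J\<in>T. I \<subseteq> J}" using assms(1) by blast
    then have "finite ?S" using finite_tree_ancestors[of I] I assms(1) by (meson finite_subset subsetD)
    then obtain K where K: "K \<in> ?S" "\<forall>J\<in>?S. K \<subseteq> J \<longrightarrow> K = J"
      using finite_has_maximal2[of ?S I] I by blast
    then have "K \<in> F'" unfolding F'_def by auto
    then show ?thesis using K by blast
  qed
  moreover have "F' \<subseteq> F" by (auto simp: F'_def)
  ultimately show "\<Union>F' = \<Union>F" by blast
  show "disjoint F'"
  proof (rule disjointI)
    fix I J assume "I \<in> F'" "J \<in> F'" "I \<noteq> J"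
    then show "I \<inter> J = {}" using tree_nested[of I J] assms(1) unfolding F'_def by blast
  qed
qed

end

section \<open>The Hardy operator\<close>

definition hardy_operator :: "(real \<Rightarrow> real) \<Rightarrow> real \<Rightarrow> real" where
  "hardy_operator g t = (1 / t) * (\<integral>u\<in>{0<..t}. g u \<partial>lborel)"

lemma set_integrable_const_Ioc:
  fixes a b c :: real assumes "a \<le> b"
  shows "set_integrable lborel {a<..b} (\<lambda>_. c)"
proof -
  have "integrable lborel (\<lambda>x. c * indicator {a<..b} x)"
    using assms by (intro integrable_mult_right integrable_real_indicator) auto
  then show ?thesis unfolding set_integrable_def by (simp add: mult.commute)
qed

context
  fixes g :: "real \<Rightarrow> real"
  assumes g_nonneg: "\<And>t. t \<in> {0<..1} \<Longrightarrow> 0 \<le> g t"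
    and g_integrable: "set_integrable lborel {0<..1} g"
    and g_antimono: "\<And>s t. 0 < s \<Longrightarrow> s \<le> t \<Longrightarrow> t \<le> 1 \<Longrightarrow> g t \<le> g s"
begin

lemma set_integrable_Ioc_subinterval: "0 \<le> a \<Longrightarrow> b \<le> 1 \<Longrightarrow> set_integrable lborel {a<..b} g"
  by (rule set_integrable_subset[OF g_integrable]) auto

lemma nn_set_integral_Ioc_eq:
  assumes "0 \<le> s" "s \<le> 1"
  shows "(\<integral>\<^sup>+t\<in>{0<..s}. ennreal (g t) \<partial>lborel) = ennreal (\<integral>t\<in>{0<..s}. g t \<partial>lborel)"
proof -
  have "integrable lborel (\<lambda>t. indicator {0<..s} t *\<^sub>R g t)"
    using set_integrable_Ioc_subinterval[of 0 s] assms unfolding set_integrable_def by simp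
  moreover have "(\<integral>\<^sup>+t\<in>{0<..s}. ennreal (g t) \<partial>lborel) = (\<integral>\<^sup>+t. ennreal (indicator {0<..s} t *\<^sub>R g t) \<partial>lborel)"
    by (intro nn_integral_cong) (auto simp: indicator_def)
  ultimately show ?thesis
    using assms by (simp add: set_lebesgue_integral_def nn_integral_eq_integral indicator_def g_nonneg)
qed

lemma hardy_operator_nonneg: "t \<in> {0<..1} \<Longrightarrow> 0 \<le> hardy_operator g t"
  unfolding hardy_operator_def set_lebesgue_integral_def
  by (auto intro!: integral_nonneg_AE AE_I2 simp: indicator_def g_nonneg)

text \<open>The mean of a non-increasing function over \<open>(0, t]\<close> is non-increasing in \<open>t\<close>: the extra part
  \<open>(t1, t2]\<close> only contributes values below \<open>g t1\<close>, which is itself below the mean over \<open>(0, t1]\<close>.\<close>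
lemma hardy_operator_antimono:
  assumes "0 < t1" "t1 \<le> t2" "t2 \<le> 1"
  shows "hardy_operator g t2 \<le> hardy_operator g t1"
proof -
  define G1 where "G1 = (\<integral>u\<in>{0<..t1}. g u \<partial>lborel)"
  define R where "R = (\<integral>u\<in>{t1<..t2}. g u \<partial>lborel)"
  have "{0<..t2} = {0<..t1} \<union> {t1<..t2}" using assms by auto
  then have split: "(\<integral>u\<in>{0<..t2}. g u \<partial>lborel) = G1 + R"
    unfolding G1_def R_def using assms by (simp add: set_integral_Un[symmetric] set_integrable_Ioc_subinterval)
  have "R \<le> (\<integral>u\<in>{t1<..t2}. g t1 \<partial>lborel)"
    unfolding R_def using assms
    by (intro set_integral_mono set_integrable_Ioc_subinterval set_integrable_const_Ioc) (auto intro!: g_antimono)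
  then have R: "R \<le> (t2 - t1) * g t1" using assms by (simp add: set_integral_const)
  have "t1 * g t1 = (\<integral>u\<in>{0<..t1}. g t1 \<partial>lborel)" using assms by (simp add: set_integral_const)
  also have "\<dots> \<le> G1"
    unfolding G1_def using assms
    by (intro set_integral_mono set_integrable_Ioc_subinterval set_integrable_const_Ioc) (auto intro!: g_antimono)
  finally have G1: "t1 * g t1 \<le> G1" .
  have "t1 * (G1 + R) \<le> t1 * G1 + t1 * ((t2 - t1) * g t1)"
    using R assms by (simp add: distrib_left mult_left_mono)
  also have "\<dots> = t1 * G1 + (t2 - t1) * (t1 * g t1)" by (simp add: algebra_simps)
  also have "\<dots> \<le> t1 * G1 + (t2 - t1) * G1"
    using G1 assms by (intro add_left_mono mult_left_mono) auto
  also have "\<dots> = t2 * G1" by (simp add: algebra_simps)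
  finally have ineq: "t1 * (G1 + R) \<le> t2 * G1" .
  have "hardy_operator g t2 = t1 * (G1 + R) / (t1 * t2)"
    using assms by (simp add: hardy_operator_def split)
  also have "\<dots> \<le> t2 * G1 / (t1 * t2)" using ineq assms by (intro divide_right_mono) auto
  also have "\<dots> = hardy_operator g t1" using assms by (simp add: hardy_operator_def G1_def)
  finally show ?thesis .
qed

lemma hardy_operator_gt_on_Ioc:
  assumes "0 < s" "s \<le> 1" "l * s < (\<integral>u\<in>{0<..s}. g u \<partial>lborel)"
  shows "{0<..s} \<subseteq> {t\<in>{0<..1}. l < hardy_operator g t}"
proof
  fix t assume t: "t \<in> {0<..s}"
  have "l < hardy_operator g s" using assms by (simp add: hardy_operator_def pos_less_divide_eq)
  also have "\<dots> \<le> hardy_operator g t" using t assms by (intro hardy_operator_antimono) auto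
  finally show "t \<in> {t\<in>{0<..1}. l < hardy_operator g t}" using t assms by auto
qed

text \<open>Measurability goes through the monotone primitive of the extension of \<open>g\<close> by zero.\<close>
lemma borel_measurable_hardy_operator:
  "(\<lambda>t. indicator {0<..1} t * hardy_operator g t) \<in> borel_measurable lborel"
proof -
  define G where "G t = (\<integral>u\<in>{0<..t}. indicator {0<..1} u * g u \<partial>lborel)" for t
  have "integrable lborel (\<lambda>u. indicator {0<..1} u * g u)"
    using g_integrable unfolding set_integrable_def by simp
  then have "mono G"
    unfolding G_def set_lebesgue_integral_def
    by (intro monoI integral_mono integrable_mult_indicator) (auto simp: indicator_def g_nonneg)
  then have "(\<lambda>t. indicator {0<..1} t * ((1 / t) * G t)) \<in> borel_measurable lborel"
    using borel_measurable_mono[of G] by measurable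
  moreover have "G t = (\<integral>u\<in>{0<..t}. g u \<partial>lborel)" if "t \<le> 1" for t
    unfolding G_def using that by (intro set_lebesgue_integral_cong) (auto simp: indicator_def)
  then have "indicator {0<..1} t * hardy_operator g t = indicator {0<..1} t * ((1 / t) * G t)" for t
    by (cases "t \<le> 1") (simp_all add: hardy_operator_def indicator_def)
  ultimately show ?thesis by simp
qed

lemma sets_hardy_operator_gt: "{t\<in>{0<..1}. l < hardy_operator g t} \<in> sets lborel"
proof -
  have "{t\<in>{0<..1}. l < hardy_operator g t} = {t\<in>space lborel. l < indicator {0<..1} t * hardy_operator g t} \<inter> {0<..1}"
    by auto
  also have "\<dots> \<in> sets lborel"
    using borel_measurable_hardy_operator by measurable
  finally show ?thesis .
qed

end

section \<open>The decreasing rearrangement\<close>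

context
  fixes M :: "'a measure" and \<phi> :: "'a \<Rightarrow> real"
  assumes finite_M: "finite_measure M" and \<phi>_measurable[measurable]: "\<phi> \<in> borel_measurable M"
begin

interpretation finite_measure M by (rule finite_M)

lemma bdd_above_decr_rearr:
  assumes "0 < t"
  shows "bdd_above ((\<lambda>e. INF x\<in>e. \<bar>\<phi> x\<bar>) ` {e\<in>sets M. measure M e = t})"
proof -
  define U where "U n = {x\<in>space M. real n < \<bar>\<phi> x\<bar>}" for n :: nat
  have U_sets: "range U \<subseteq> sets M" unfolding U_def by (intro image_subsetI) measurable
  have U_dec: "decseq U" by (rule decseq_SucI) (auto simp: U_def)
  have "(\<Inter>n. U n) = {}"
  proof -
    have "x \<notin> (\<Inter>n. U n)" for x
    proof -
      obtain n where "\<bar>\<phi> x\<bar> < real n" using reals_Archimedean2 by blast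
      then show ?thesis by (auto simp: U_def intro!: exI[of _ n])
    qed
    then show ?thesis by blast
  qed
  then have "(\<lambda>n. measure M (U n)) \<longlonglongrightarrow> 0"
    using finite_Lim_measure_decseq[OF U_sets U_dec] by simp
  then have "eventually (\<lambda>n. measure M (U n) < t) sequentially"
    using assms by (rule order_tendstoD(2))
  then obtain R where R: "measure M (U R) < t" by (auto simp: eventually_sequentially)
  show ?thesis
  proof (rule bdd_aboveI2)
    fix e assume e: "e \<in> {e\<in>sets M. measure M e = t}"
    show "(INF x\<in>e. \<bar>\<phi> x\<bar>) \<le> real R"
    proof (rule ccontr)
      assume "\<not> ?thesis"
      then have "real R < (INF x\<in>e. \<bar>\<phi> x\<bar>)" by simp
      have "e \<subseteq> U R"
      proof
        fix x assume x: "x \<in> e"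
        have "(INF x\<in>e. \<bar>\<phi> x\<bar>) \<le> \<bar>\<phi> x\<bar>"
          using x by (intro cINF_lower bdd_belowI2[of _ 0]) auto
        moreover have "x \<in> space M" using x e sets.sets_into_space by auto
        ultimately show "x \<in> U R" using \<open>real R < (INF x\<in>e. \<bar>\<phi> x\<bar>)\<close> by (auto simp: U_def)
      qed
      then have "measure M e \<le> measure M (U R)"
        using e U_sets by (intro finite_measure_mono) auto
      then show False using e R by auto
    qed
  qed
qed

text \<open>Non-atomicity turns a large level set into a set of measure exactly \<open>t\<close> on which \<open>\<bar>\<phi>\<bar>\<close>
  stays above \<open>r\<close> by a definite margin.\<close>
lemma less_decr_rearr:
  assumes "non_atomic M" "0 < t" "t < measure M {x\<in>space M. r < \<bar>\<phi> x\<bar>}"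
  shows "r < decr_rearr M \<phi> t"
proof -
  define S where "S n = {x\<in>space M. r + 1 / Suc n \<le> \<bar>\<phi> x\<bar>}" for n :: nat
  have S_sets: "range S \<subseteq> sets M" unfolding S_def by (intro image_subsetI) measurable
  have "incseq S"
  proof (rule incseq_SucI)
    fix n
    have "r + 1 / Suc (Suc n) \<le> r + 1 / Suc n" by (simp add: frac_le)
    then show "S n \<subseteq> S (Suc n)" unfolding S_def by auto
  qed
  moreover have "(\<Union>n. S n) = {x\<in>space M. r < \<bar>\<phi> x\<bar>}"
  proof (intro set_eqI iffI)
    fix x assume "x \<in> {x\<in>space M. r < \<bar>\<phi> x\<bar>}"
    then obtain n where "x \<in> space M" "1 / Suc n < \<bar>\<phi> x\<bar> - r"
      using nat_approx_posE[of "\<bar>\<phi> x\<bar> - r"] by auto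
    then show "x \<in> (\<Union>n. S n)" by (auto simp: S_def intro!: exI[of _ n])
  next
    fix x assume "x \<in> (\<Union>n. S n)"
    then obtain n where "x \<in> space M" "r + 1 / Suc n \<le> \<bar>\<phi> x\<bar>" by (auto simp: S_def)
    moreover have "0 < 1 / real (Suc n)" by simp
    ultimately have "x \<in> space M" "r < \<bar>\<phi> x\<bar>" by linarith+
    then show "x \<in> {x\<in>space M. r < \<bar>\<phi> x\<bar>}" by blast
  qed
  ultimately have "(\<lambda>n. measure M (S n)) \<longlonglongrightarrow> measure M {x\<in>space M. r < \<bar>\<phi> x\<bar>}"
    using finite_Lim_measure_incseq[OF S_sets] by simp
  then have "eventually (\<lambda>n. t < measure M (S n)) sequentially"
    using assms(3) by (rule order_tendstoD(1))
  then obtain n where n: "t < measure M (S n)" by (auto simp: eventually_sequentially)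
  then obtain e where e: "e \<in> sets M" "e \<subseteq> S n" "measure M e = t"
    using non_atomic_subset_measure_eq[OF finite_M assms(1), of "S n" t] S_sets assms(2) by auto
  then have "e \<noteq> {}" using assms(2) by auto
  then have "r + 1 / Suc n \<le> (INF x\<in>e. \<bar>\<phi> x\<bar>)"
    using e(2) by (intro cINF_greatest) (auto simp: S_def)
  also have "\<dots> \<le> decr_rearr M \<phi> t"
    unfolding decr_rearr_def using e bdd_above_decr_rearr[OF assms(2)] by (intro cSup_upper) auto
  finally show ?thesis
    using divide_pos_pos[of 1 "real (Suc n)"] by linarith
qed

end

text \<open>The Hardy--Littlewood inequality, proved by comparing the distribution function of
  \<open>\<bar>\<phi>\<bar>\<close> on \<open>E\<close> with that of \<open>g\<close> on \<open>(0, \<mu> E]\<close>.\<close>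
lemma nn_set_integral_le_decr_rearr:
  assumes "prob_space M" "non_atomic M" and [measurable]: "\<phi> \<in> borel_measurable M"
    and "(\<lambda>t. indicator {0<..1} t * g t) \<in> borel_measurable lborel"
    and "\<And>t. t \<in> {0<..1} \<Longrightarrow> decr_rearr M \<phi> t = g t"
    and [measurable]: "E \<in> sets M"
  shows "(\<integral>\<^sup>+x\<in>E. ennreal \<bar>\<phi> x\<bar> \<partial>M) \<le> (\<integral>\<^sup>+t\<in>{0<..measure M E}. ennreal (g t) \<partial>lborel)"
proof -
  interpret prob_space M by fact
  define s where "s = measure M E"
  have s: "0 \<le> s" "s \<le> 1" by (auto simp: s_def)
  have "(\<lambda>t. ennreal (g t) * indicator {0<..s} t) = (\<lambda>t. ennreal (indicator {0<..1} t * g t) * indicator {0<..s} t)"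
    using s by (auto simp: fun_eq_iff indicator_def)
  then have g_measurable[measurable]: "(\<lambda>t. ennreal (g t) * indicator {0<..s} t) \<in> borel_measurable lborel"
    using assms(4) by simp
  have "emeasure M {x\<in>space M. ennreal r < ennreal \<bar>\<phi> x\<bar> * indicator E x}
      \<le> emeasure lborel {t\<in>space lborel. ennreal r < ennreal (g t) * indicator {0<..s} t}" if "0 \<le> r" for r
  proof -
    define c where "c = min s (measure M {x\<in>space M. r < \<bar>\<phi> x\<bar>})"
    have "0 \<le> c" using s by (simp add: c_def)
    have "{x\<in>space M. ennreal r < ennreal \<bar>\<phi> x\<bar> * indicator E x} = {x\<in>space M. r < \<bar>\<phi> x\<bar>} \<inter> E"
      using that by (auto simp: indicator_def ennreal_less_iff)
    moreover have "measure M ({x\<in>space M. r < \<bar>\<phi> x\<bar>} \<inter> E) \<le> c"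
      unfolding c_def s_def by (auto intro!: finite_measure_mono)
    ultimately have "emeasure M {x\<in>space M. ennreal r < ennreal \<bar>\<phi> x\<bar> * indicator E x} \<le> ennreal c"
      by (simp add: emeasure_eq_measure ennreal_leI)
    also have "\<dots> = emeasure lborel {0<..<c}" using \<open>0 \<le> c\<close> by simp
    also have "\<dots> \<le> emeasure lborel {t\<in>space lborel. ennreal r < ennreal (g t) * indicator {0<..s} t}"
    proof (rule emeasure_mono)
      have "r < g t" if "t \<in> {0<..<c}" for t
      proof -
        have "r < decr_rearr M \<phi> t"
          using that by (intro less_decr_rearr[OF finite_measure_axioms assms(3,2)]) (auto simp: c_def)
        moreover have "t \<in> {0<..1}" using that s by (auto simp: c_def)
        ultimately show ?thesis using assms(5) by simp
      qed
      then show "{0<..<c} \<subseteq> {t\<in>space lborel. ennreal r < ennreal (g t) * indicator {0<..s} t}"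
        using \<open>0 \<le> r\<close> by (auto simp: c_def indicator_def ennreal_less_iff)
    qed measurable
    finally show ?thesis .
  qed
  moreover have "(\<lambda>x. ennreal \<bar>\<phi> x\<bar> * indicator E x) \<in> borel_measurable M" by measurable
  ultimately have "(\<integral>\<^sup>+x. ennreal \<bar>\<phi> x\<bar> * indicator E x \<partial>M) \<le> (\<integral>\<^sup>+t. ennreal (g t) * indicator {0<..s} t \<partial>lborel)"
    using nn_integral_mono_distribution[OF prob_space_imp_sigma_finite[OF assms(1)]
        lborel.sigma_finite_measure_axioms _ g_measurable] by blast
  then show ?thesis by (simp add: s_def)
qed

section \<open>The dyadic maximal operator\<close>

definition nn_set_average :: "'a measure \<Rightarrow> ('a \<Rightarrow> real) \<Rightarrow> 'a set \<Rightarrow> ennreal" where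
  "nn_set_average M \<phi> I = (\<integral>\<^sup>+y\<in>I. ennreal \<bar>\<phi> y\<bar> \<partial>M) / emeasure M I"

lemma dyadic_max_level_set:
  assumes "T \<subseteq> sets M"
  shows "{x\<in>space M. ennreal l < dyadic_max M T \<phi> x} = \<Union>{I\<in>T. ennreal l < nn_set_average M \<phi> I}"
proof -
  have "\<Union>{I\<in>T. ennreal l < nn_set_average M \<phi> I} \<subseteq> space M"
    using assms sets.sets_into_space by blast
  then show ?thesis
    by (auto simp: dyadic_max_def nn_set_average_def less_SUP_iff)
qed

lemma borel_measurable_dyadic_max:
  assumes "T \<subseteq> sets M" "countable T"
  shows "dyadic_max M T \<phi> \<in> borel_measurable M"
proof (rule borel_measurableI_greater)
  fix y :: ennreal
  show "{x\<in>space M. y < dyadic_max M T \<phi> x} \<in> sets M"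
  proof (cases y)
    case (real l)
    have "\<Union>{I\<in>T. ennreal l < nn_set_average M \<phi> I} \<in> sets M"
      using assms by (intro sets.countable_Union) (auto intro: countable_subset)
    then show ?thesis using real dyadic_max_level_set[OF assms(1)] by simp
  next
    case top
    then show ?thesis by simp
  qed
qed

lemma nn_set_integral_gt_of_average_gt:
  assumes "finite_measure M" "I \<in> sets M" "0 < measure M I"
    and "ennreal l < nn_set_average M \<phi> I"
  shows "ennreal l * emeasure M I < (\<integral>\<^sup>+y\<in>I. ennreal \<bar>\<phi> y\<bar> \<partial>M)"
proof (rule ccontr)
  interpret finite_measure M by fact
  assume "\<not> ?thesis"
  then have "nn_set_average M \<phi> I \<le> ennreal l * emeasure M I / emeasure M I"
    unfolding nn_set_average_def by (intro divide_right_mono_ennreal) simp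
  also have "\<dots> = ennreal l"
    using assms by (intro ennreal_mult_divide_eq) (auto simp: emeasure_eq_measure)
  finally show False using assms(4) by simp
qed

text \<open>Strictness survives the countable sum because one summand is strict and the left-hand side
  is finite.\<close>
lemma nn_set_integral_Union_gt:
  fixes f :: "'a \<Rightarrow> ennreal"
  assumes "finite_measure M" and [measurable]: "f \<in> borel_measurable M"
    and "countable F" "F \<subseteq> sets M" "disjoint F" "F \<noteq> {}"
    and gt: "\<And>I. I \<in> F \<Longrightarrow> ennreal l * emeasure M I < (\<integral>\<^sup>+y\<in>I. f y \<partial>M)"
  shows "ennreal l * emeasure M (\<Union>F) < (\<integral>\<^sup>+y\<in>\<Union>F. f y \<partial>M)"
proof -
  interpret finite_measure M by fact
  define N where "N = density M f"
  have N: "emeasure N X = (\<integral>\<^sup>+y\<in>X. f y \<partial>M)" if "X \<in> sets M" for X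
    unfolding N_def using that by (intro emeasure_density) auto
  have sets_N[simp]: "sets N = sets M" by (simp add: N_def)
  obtain I0 where I0: "I0 \<in> F" using assms(6) by blast
  define G where "G = F - {I0}"
  have G: "countable G" "G \<subseteq> sets M" "disjoint_family_on (\<lambda>I. I) G"
    using assms(3,4,5) by (auto simp: G_def disjoint_family_on_def dest: disjointD)
  have I0_sets: "I0 \<in> sets M" and UG_sets: "\<Union>G \<in> sets M"
    using I0 G assms(4) by (auto intro: sets.countable_Union)
  have "I0 \<inter> \<Union>G = {}" using assms(5) I0 by (auto simp: G_def dest: disjointD)
  moreover have "\<Union>F = I0 \<union> \<Union>G" using I0 by (auto simp: G_def)
  ultimately have split_M: "emeasure M (\<Union>F) = emeasure M I0 + emeasure M (\<Union>G)"
    and split_N: "emeasure N (\<Union>F) = emeasure N I0 + emeasure N (\<Union>G)"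
    using I0_sets UG_sets by (simp_all add: plus_emeasure)
  have "ennreal l * emeasure M (\<Union>G) = (\<integral>\<^sup>+I. ennreal l * emeasure M I \<partial>count_space G)"
    using emeasure_UN_countable[of G "\<lambda>I. I" M, OF subsetD[OF G(2)] G(1,3)]
    by (simp add: nn_integral_cmult)
  also have "\<dots> \<le> (\<integral>\<^sup>+I. emeasure N I \<partial>count_space G)"
    using gt G(2) N by (intro nn_integral_mono) (auto simp: G_def less_imp_le)
  also have "\<dots> = emeasure N (\<Union>G)"
    using emeasure_UN_countable[of G "\<lambda>I. I" N, OF _ G(1,3)] subsetD[OF G(2)] by simp
  finally have UG_le: "ennreal l * emeasure M (\<Union>G) \<le> emeasure N (\<Union>G)" .
  have "ennreal l * emeasure M (\<Union>F) < emeasure N (\<Union>F)"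
  proof (cases "emeasure N (\<Union>G) = \<infinity>")
    case True
    then show ?thesis
      using split_N by (simp add: emeasure_eq_measure ennreal_mult_less_top)
  next
    case False
    have "ennreal l * emeasure M (\<Union>F) = ennreal l * emeasure M I0 + ennreal l * emeasure M (\<Union>G)"
      unfolding split_M by (rule distrib_left)
    also have "\<dots> \<le> ennreal l * emeasure M I0 + emeasure N (\<Union>G)"
      using UG_le by (rule add_left_mono)
    also have "\<dots> < emeasure N I0 + emeasure N (\<Union>G)"
      using gt[OF I0] N[OF I0_sets] False
      by (subst (1 2) add.commute) (auto simp: ennreal_add_left_cancel_less)
    finally show ?thesis using split_N by simp
  qed
  then show ?thesis using N assms(3,4) by (simp add: sets.countable_Union)
qed

text \<open>The maximal tree sets on which the average of \<open>\<bar>\<phi>\<bar>\<close> exceeds \<open>l\<close> partition the level set.\<close>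
lemma nn_set_integral_dyadic_max_level_set_gt:
  fixes \<phi> :: "'a \<Rightarrow> real" and l :: real
  assumes "finite_measure M" "tree_with_children M T C" and [measurable]: "\<phi> \<in> borel_measurable M"
  defines "E \<equiv> {x\<in>space M. ennreal l < dyadic_max M T \<phi> x}"
  assumes "0 < measure M E"
  shows "ennreal l * emeasure M E < (\<integral>\<^sup>+x\<in>E. ennreal \<bar>\<phi> x\<bar> \<partial>M)"
proof -
  define F where "F = {I\<in>T. ennreal l < nn_set_average M \<phi> I}"
  define F' where "F' = {I\<in>F. \<forall>J\<in>F. I \<subseteq> J \<longrightarrow> J = I}"
  have T: "T \<subseteq> sets M" "countable T" "\<And>I. I \<in> T \<Longrightarrow> 0 < measure M I"
    using tree_subset_sets countable_tree tree_measure_pos assms(2) by auto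
  have "F \<subseteq> T" by (auto simp: F_def)
  moreover have "E = \<Union>F"
    unfolding E_def F_def using dyadic_max_level_set[OF T(1)] .
  ultimately have F': "\<Union>F' = E" "disjoint F'" "F' \<subseteq> T"
    using tree_maximal_elements[OF assms(2), of F] unfolding F'_def by auto
  have "ennreal l * emeasure M (\<Union>F') < (\<integral>\<^sup>+x\<in>\<Union>F'. ennreal \<bar>\<phi> x\<bar> \<partial>M)"
  proof (rule nn_set_integral_Union_gt[OF assms(1) _ countable_subset[OF F'(3) T(2)]])
    show "F' \<subseteq> sets M" using F'(3) T(1) by blast
    show "F' \<noteq> {}" using F'(1) assms(5) by auto
    show "disjoint F'" by (fact F'(2))
    show "ennreal l * emeasure M I < (\<integral>\<^sup>+x\<in>I. ennreal \<bar>\<phi> x\<bar> \<partial>M)" if "I \<in> F'" for I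
      using that F'(3) T(1,3) unfolding F'_def F_def
      by (intro nn_set_integral_gt_of_average_gt[OF assms(1)]) auto
  qed measurable
  then show ?thesis using F'(1) by simp
qed

lemma emeasure_dyadic_max_gt_le:
  assumes prob: "prob_space M" and non_atomic: "non_atomic M"
    and tree: "tree_with_children M T C"
    and g_nonneg: "\<And>t. t \<in> {0<..1} \<Longrightarrow> 0 \<le> g t"
    and g_integrable: "set_integrable lborel {0<..1} g"
    and g_antimono: "\<And>s t. 0 < s \<Longrightarrow> s \<le> t \<Longrightarrow> t \<le> 1 \<Longrightarrow> g t \<le> g s"
    and \<phi>_measurable[measurable]: "\<phi> \<in> borel_measurable M"
    and rearrangement: "\<And>t. t \<in> {0<..1} \<Longrightarrow> decr_rearr M \<phi> t = g t"
    and "0 \<le> l"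
  shows "emeasure M {x\<in>space M. ennreal l < dyadic_max M T \<phi> x}
    \<le> emeasure lborel {t\<in>{0<..1}. l < hardy_operator g t}"
proof -
  interpret prob_space M by (rule prob)
  note g = g_nonneg g_integrable g_antimono
  define E where "E = {x\<in>space M. ennreal l < dyadic_max M T \<phi> x}"
  define s where "s = measure M E"
  have E_sets: "E \<in> sets M"
    unfolding E_def
    using borel_measurable_dyadic_max[OF tree_subset_sets[OF tree] countable_tree[OF tree]] by measurable
  show ?thesis
  proof (cases "s = 0")
    case True
    then show ?thesis by (simp add: E_def[symmetric] s_def emeasure_eq_measure)
  next
    case False
    then have s: "0 < s" "s \<le> 1" by (auto simp: s_def zero_less_measure_iff)
    have "ennreal (l * s) < (\<integral>\<^sup>+x\<in>E. ennreal \<bar>\<phi> x\<bar> \<partial>M)"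
      using nn_set_integral_dyadic_max_level_set_gt[OF finite_measure_axioms tree \<phi>_measurable] s \<open>0 \<le> l\<close>
      by (simp add: E_def s_def emeasure_eq_measure ennreal_mult)
    also have "\<dots> \<le> (\<integral>\<^sup>+t\<in>{0<..s}. ennreal (g t) \<partial>lborel)"
      using nn_set_integral_le_decr_rearr[OF prob non_atomic \<phi>_measurable _ rearrangement E_sets]
        borel_measurable_integrable[OF g_integrable[unfolded set_integrable_def]]
      by (simp add: s_def)
    also have "\<dots> = ennreal (\<integral>t\<in>{0<..s}. g t \<partial>lborel)"
      using s by (intro nn_set_integral_Ioc_eq[OF g]) auto
    finally have "l * s < (\<integral>t\<in>{0<..s}. g t \<partial>lborel)"
      using s \<open>0 \<le> l\<close> by (simp add: ennreal_less_iff)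
    then have "{0<..s} \<subseteq> {t\<in>{0<..1}. l < hardy_operator g t}"
      using s by (intro hardy_operator_gt_on_Ioc[OF g])
    then have "emeasure lborel {0<..s} \<le> emeasure lborel {t\<in>{0<..1}. l < hardy_operator g t}"
      by (intro emeasure_mono sets_hardy_operator_gt[OF g])
    then show ?thesis using s by (simp add: E_def[symmetric] s_def emeasure_eq_measure)
  qed
qed

theorem lemma6p1:
  fixes M :: "'a measure" and T :: "'a set set" and q :: real
    and g :: "real \<Rightarrow> real" and \<phi> :: "'a \<Rightarrow> real"
  assumes "prob_space M" and "non_atomic M" and "is_tree M T"
    and "0 < q" and "q < 1"
    and "\<And>t. t \<in> {0<..1} \<Longrightarrow> g t \<ge> 0"
    and "set_integrable lborel {0<..1} g"
    and "\<And>s t. 0 < s \<Longrightarrow> s \<le> t \<Longrightarrow> t \<le> 1 \<Longrightarrow> g t \<le> g s"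
    and "(\<integral>\<^sup>+ t\<in>{0<..1}. ennreal (((1 / t) * (\<integral>u\<in>{0<..t}. g u \<partial>lborel)) powr q) \<partial>lborel) < \<infinity>"
    and "\<phi> \<in> borel_measurable M" and "\<And>x. x \<in> space M \<Longrightarrow> \<phi> x \<ge> 0"
    and "\<And>t. t \<in> {0<..1} \<Longrightarrow> decr_rearr M \<phi> t = g t"
  shows "(\<integral>\<^sup>+ x. ennreal_powr (dyadic_max M T \<phi> x) q \<partial>M)
           \<le> (\<integral>\<^sup>+ t\<in>{0<..1}. ennreal (((1 / t) * (\<integral>u\<in>{0<..t}. g u \<partial>lborel)) powr q) \<partial>lborel)"
proof -
  obtain C where tree: "tree_with_children M T C" using assms(3) unfolding is_tree_def by blast
  note g = assms(6-8)
  define h where "h t = ennreal ((indicator {0<..1} t * hardy_operator g t) powr q)" for t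
  have "(\<integral>\<^sup>+x. ennreal_powr (dyadic_max M T \<phi> x) q \<partial>M) \<le> (\<integral>\<^sup>+t. h t \<partial>lborel)"
  proof (rule nn_integral_mono_distribution)
    show "sigma_finite_measure M" using assms(1) by (rule prob_space_imp_sigma_finite)
    show "(\<lambda>x. ennreal_powr (dyadic_max M T \<phi> x) q) \<in> borel_measurable M"
      using borel_measurable_dyadic_max[OF tree_subset_sets[OF tree] countable_tree[OF tree]]
      unfolding ennreal_powr_def by measurable
    show "h \<in> borel_measurable lborel"
      using borel_measurable_hardy_operator[OF g] unfolding h_def by measurable
    fix r :: real assume "0 \<le> r"
    have "ennreal r < h t \<longleftrightarrow> t \<in> {0<..1} \<and> r powr (1 / q) < hardy_operator g t" for t
      using \<open>0 \<le> r\<close> assms(4) hardy_operator_nonneg[OF g, of t]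
        less_powr_iff_powr_inverse_less[of r "hardy_operator g t" q]
      by (cases "t \<in> {0<..1}") (auto simp: h_def ennreal_less_iff)
    then show "emeasure M {x\<in>space M. ennreal r < ennreal_powr (dyadic_max M T \<phi> x) q}
        \<le> emeasure lborel {t\<in>space lborel. ennreal r < h t}"
      using emeasure_dyadic_max_gt_le[OF assms(1,2) tree g assms(10,12), of "r powr (1 / q)"]
      by (simp add: less_ennreal_powr_iff[OF \<open>0 \<le> r\<close> assms(4)])
  qed (rule lborel.sigma_finite_measure_axioms)
  also have "\<dots> = (\<integral>\<^sup>+ t\<in>{0<..1}. ennreal (((1 / t) * (\<integral>u\<in>{0<..t}. g u \<partial>lborel)) powr q) \<partial>lborel)"
    by (intro nn_integral_cong) (simp add: h_def hardy_operator_def indicator_def)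
  finally show ?thesis .
qed

end
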